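(* Let $(M,d)$ be a metric space in which any two points $A,B\in M$ are joined by a unique metric segment $[A,B]$. Then $(M,d)$ is an $\mathbb R$-tree if and only if the following Condition (A) holds: for any three distinct points $A,B,C\in M$ there exists a unique $O\in M$ such that $\{X,Y\}\subset\mathcal C_d(Z,O)$ for all distinct $X,Y,Z\in\{A,B,C\}$.
   Context: For a metric space $(M,d)$ and $A,B\in M$, the metric segment is $[A,B]=\{X\in M:\ d(A,X)+d(X,B)=d(A,B)<+\infty\}$, and $\mathcal C_d(A,B)=\{X\in M:\ d(X,A)=d(X,B)+d(A,B)<+\infty\}$. An $\mathbb R$-tree is a nonempty metric space $(M,d)$ such that: (a) any two points $A,B\in M$ are joined by a unique metric segment $[A,B]$; (b) for all $A,B,C\in M$, $[A,B]\cap[A,C]=[A,O]$ for some $O\in M$; (c) if $A,B,C\in M$ and $[A,B]\cap[B,C]=\{B\}$, then $[A,B]\cup[B,C]=[A,C]$. *)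

theory Defs
  imports "HOL-Analysis.Analysis"
begin

definition msegment :: "'a set \<Rightarrow> ('a \<Rightarrow> 'a \<Rightarrow> real) \<Rightarrow> 'a \<Rightarrow> 'a \<Rightarrow> 'a set" where
  "msegment M d A B = {X \<in> M. d A X + d X B = d A B}"

definition Cd :: "'a set \<Rightarrow> ('a \<Rightarrow> 'a \<Rightarrow> real) \<Rightarrow> 'a \<Rightarrow> 'a \<Rightarrow> 'a set" where
  "Cd M d A B = {X \<in> M. d X A = d X B + d A B}"

text \<open>A and B are joined by a unique metric segment: the set [A,B] is the image of an
  isometric embedding of the real interval [0, d(A,B)] sending 0 to A and d(A,B) to B
  (so it is a genuine segment, and every geodesic from A to B, lying in [A,B], coincides with it).\<close>
definition joined_by_unique_segment :: "'a set \<Rightarrow> ('a \<Rightarrow> 'a \<Rightarrow> real) \<Rightarrow> 'a \<Rightarrow> 'a \<Rightarrow> bool" where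
  "joined_by_unique_segment M d A B \<longleftrightarrow>
     (\<exists>\<gamma>::real \<Rightarrow> 'a. \<gamma> 0 = A \<and> \<gamma> (d A B) = B \<and>
        \<gamma> ` {0..d A B} = msegment M d A B \<and>
        (\<forall>s\<in>{0..d A B}. \<forall>t\<in>{0..d A B}. d (\<gamma> s) (\<gamma> t) = \<bar>s - t\<bar>))"

definition R_tree :: "'a set \<Rightarrow> ('a \<Rightarrow> 'a \<Rightarrow> real) \<Rightarrow> bool" where
  "R_tree M d \<longleftrightarrow> Metric_space M d \<and> M \<noteq> {} \<and>
     (\<forall>A\<in>M. \<forall>B\<in>M. joined_by_unique_segment M d A B) \<and>
     (\<forall>A\<in>M. \<forall>B\<in>M. \<forall>C\<in>M. \<exists>P\<in>M. msegment M d A B \<inter> msegment M d A C = msegment M d A P) \<and>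
     (\<forall>A\<in>M. \<forall>B\<in>M. \<forall>C\<in>M. msegment M d A B \<inter> msegment M d B C = {B} \<longrightarrow>
        msegment M d A B \<union> msegment M d B C = msegment M d A C)"

definition condition_A :: "'a set \<Rightarrow> ('a \<Rightarrow> 'a \<Rightarrow> real) \<Rightarrow> bool" where
  "condition_A M d \<longleftrightarrow>
     (\<forall>A\<in>M. \<forall>B\<in>M. \<forall>C\<in>M. A \<noteq> B \<and> A \<noteq> C \<and> B \<noteq> C \<longrightarrow>
        (\<exists>!P. P \<in> M \<and>
           (\<forall>X\<in>{A,B,C}. \<forall>Y\<in>{A,B,C}. \<forall>Z\<in>{A,B,C}. X \<noteq> Y \<and> X \<noteq> Z \<and> Y \<noteq> Z \<longrightarrow>
               {X, Y} \<subseteq> Cd M d Z P)))"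

end

theory Submission
  imports Defs
begin

text \<open>The three pairwise conditions of Condition (A) say exactly that \<open>O\<close> lies on all three
  segments \<open>[A,B]\<close>, \<open>[B,C]\<close>, \<open>[A,C]\<close>, i.e. that \<open>O\<close> is a median of the triple; so
  Condition (A) means that every triple of distinct points has a unique median.
  In an \<open>\<real>\<close>-tree the branch point \<open>O\<close> with \<open>[A,B] \<inter> [A,C] = [A,O]\<close> is that median:
  \<open>[B,O]\<close> and \<open>[O,C]\<close> meet only in \<open>O\<close>, so by (c) they compose to \<open>[B,C]\<close>, and any other
  median would lie on \<open>[A,O]\<close> and on \<open>[B,O] \<union> [O,C]\<close>, hence coincide with \<open>O\<close>.
  Conversely, given unique medians, a point of \<open>[A,B] \<inter> [A,C]\<close> beyond the median \<open>O\<close> (seen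
  from \<open>A\<close>) lies on \<open>[O,C] \<subseteq> [B,C]\<close> and is therefore another median; this gives (b).
  For (c), the median of \<open>A,B,C\<close> lies in \<open>[A,B] \<inter> [B,C] = {B}\<close>, so \<open>B \<in> [A,C]\<close>; since a
  segment is an isometric copy of a real interval, it is the union of its two sub-segments at
  any of its points.\<close>

definition median_point :: "'a set \<Rightarrow> ('a \<Rightarrow> 'a \<Rightarrow> real) \<Rightarrow> 'a \<Rightarrow> 'a \<Rightarrow> 'a \<Rightarrow> 'a \<Rightarrow> bool" where
  "median_point M d A B C P \<longleftrightarrow>
     P \<in> msegment M d A B \<and> P \<in> msegment M d B C \<and> P \<in> msegment M d A C"

context Metric_space
begin

lemma mem_msegment_iff: "X \<in> msegment M d A B \<longleftrightarrow> X \<in> M \<and> d A X + d X B = d A B"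
  by (simp add: msegment_def)

lemma msegment_commute: "msegment M d A B = msegment M d B A"
  by (auto simp: msegment_def commute add.commute)

lemma msegment_same: "A \<in> M \<Longrightarrow> msegment M d A A = {A}"
  using nonneg zero by (auto simp: msegment_def commute)

lemma endpoints_mem_msegment: "A \<in> M \<Longrightarrow> B \<in> M \<Longrightarrow> A \<in> msegment M d A B \<and> B \<in> msegment M d A B"
  by (simp add: msegment_def)

lemma msegment_trans:
  assumes "A \<in> M" "B \<in> M" "Q \<in> msegment M d A B" "X \<in> msegment M d Q B"
  shows "X \<in> msegment M d A B \<and> d A X = d A Q + d Q X"
proof -
  have Q: "Q \<in> M" "d A Q + d Q B = d A B" and X: "X \<in> M" "d Q X + d X B = d Q B"
    using assms by (auto simp: mem_msegment_iff)
  have "d A X \<le> d A Q + d Q X" "d A B \<le> d A X + d X B"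
    using triangle assms(1,2) Q(1) X(1) by blast+
  with Q X show ?thesis by (auto simp: mem_msegment_iff)
qed

lemma mem_Cd_iff: "X \<in> M \<Longrightarrow> X \<in> Cd M d Z P \<longleftrightarrow> d X P + d P Z = d X Z"
  unfolding Cd_def by (auto simp: commute)

lemma median_point_in_space: "median_point M d A B C P \<Longrightarrow> P \<in> M"
  by (simp add: median_point_def mem_msegment_iff)
lemma condition_A_witness_iff_median_point:
  assumes "A \<in> M" "B \<in> M" "C \<in> M" "A \<noteq> B" "A \<noteq> C" "B \<noteq> C"
  shows "(P \<in> M \<and> (\<forall>X\<in>{A,B,C}. \<forall>Y\<in>{A,B,C}. \<forall>Z\<in>{A,B,C}. X \<noteq> Y \<and> X \<noteq> Z \<and> Y \<noteq> Z \<longrightarrow>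
            {X, Y} \<subseteq> Cd M d Z P)) \<longleftrightarrow> median_point M d A B C P" (is "?L \<longleftrightarrow> ?R")
proof
  assume L: ?L
  then have P: "P \<in> M" by blast
  note Cd_cond = L[THEN conjunct2, rule_format]
  have "{A, B} \<subseteq> Cd M d C P" "{B, C} \<subseteq> Cd M d A P"
    using Cd_cond[of A B C] Cd_cond[of B C A] assms by simp_all
  then have "d A P + d P C = d A C" "d B P + d P C = d B C" "d B P + d P A = d B A"
    using mem_Cd_iff assms by auto
  then show ?R
    unfolding median_point_def mem_msegment_iff using P commute[of A B] commute[of P A] commute[of B P]
    by auto
next
  assume R: ?R
  have "d A P + d P B = d A B" "d B P + d P C = d B C" "d A P + d P C = d A C"
    using R by (simp_all add: median_point_def mem_msegment_iff)
  then have sums: "d X P + d P Z = d X Z" if "X \<in> {A,B,C}" "Z \<in> {A,B,C}" "X \<noteq> Z" for X Z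
    using that commute[of A P] commute[of B P] commute[of C P] commute[of A B] commute[of A C] commute[of B C]
    by (auto; linarith)
  show ?L
  proof (intro conjI median_point_in_space[OF R] ballI impI subsetI)
    fix X Y Z W assume "X \<in> {A,B,C}" "Y \<in> {A,B,C}" "Z \<in> {A,B,C}" "X \<noteq> Y \<and> X \<noteq> Z \<and> Y \<noteq> Z"
      and "W \<in> {X, Y}"
    then have "W \<in> M" "d W P + d P Z = d W Z" using sums[of W Z] assms by auto
    then show "W \<in> Cd M d Z P" by (simp add: mem_Cd_iff)
  qed
qed

lemma condition_A_iff_unique_median:
  "condition_A M d \<longleftrightarrow>
     (\<forall>A\<in>M. \<forall>B\<in>M. \<forall>C\<in>M. A \<noteq> B \<and> A \<noteq> C \<and> B \<noteq> C \<longrightarrow> (\<exists>!P. median_point M d A B C P))"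
proof -
  have "(\<exists>!P. P \<in> M \<and> (\<forall>X\<in>{A,B,C}. \<forall>Y\<in>{A,B,C}. \<forall>Z\<in>{A,B,C}. X \<noteq> Y \<and> X \<noteq> Z \<and> Y \<noteq> Z \<longrightarrow>
            {X, Y} \<subseteq> Cd M d Z P)) \<longleftrightarrow> (\<exists>!P. median_point M d A B C P)"
    if "A \<in> M" "B \<in> M" "C \<in> M" "A \<noteq> B \<and> A \<noteq> C \<and> B \<noteq> C" for A B C
    using condition_A_witness_iff_median_point[of A B C] that by simp
  then show ?thesis unfolding condition_A_def by (intro ball_cong refl imp_cong) simp_all
qed

lemma inter_msegment_branch:
  assumes "A \<in> M" "B \<in> M" "C \<in> M" "Q \<in> M"
    and inter: "msegment M d A B \<inter> msegment M d A C = msegment M d A Q"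
  shows "msegment M d B Q \<inter> msegment M d Q C = {Q}"
proof
  show "{Q} \<subseteq> msegment M d B Q \<inter> msegment M d Q C"
    using endpoints_mem_msegment assms by blast
  have QAB: "Q \<in> msegment M d A B" and QAC: "Q \<in> msegment M d A C"
    using inter endpoints_mem_msegment assms by blast+
  show "msegment M d B Q \<inter> msegment M d Q C \<subseteq> {Q}"
  proof
    fix X assume X: "X \<in> msegment M d B Q \<inter> msegment M d Q C"
    then have "X \<in> msegment M d Q B" using msegment_commute by blast
    from msegment_trans[OF assms(1,2) QAB this]
    have XAB: "X \<in> msegment M d A B" and far: "d A X = d A Q + d Q X" by auto
    have "X \<in> msegment M d A C" using msegment_trans[OF assms(1,3) QAC] X by blast
    with XAB inter have "d A X + d X Q = d A Q" by (auto simp: mem_msegment_iff)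
    with far have "d Q X = 0" using commute[of X Q] nonneg[of Q X] by linarith
    then show "X \<in> {Q}" using X assms(4) by (simp add: mem_msegment_iff)
  qed
qed

lemma median_point_unique_at_branch:
  assumes "A \<in> M" "B \<in> M" "C \<in> M"
    and inter: "msegment M d A B \<inter> msegment M d A C = msegment M d A Q"
    and union: "msegment M d B Q \<union> msegment M d Q C = msegment M d B C"
    and Q: "Q \<in> msegment M d A B" "Q \<in> msegment M d A C"
    and "median_point M d A B C P"
  shows "P = Q"
proof -
  have "P \<in> msegment M d A Q" and "P \<in> msegment M d B Q \<union> msegment M d Q C"
    using assms(8) inter union by (auto simp: median_point_def)
  then have P: "P \<in> M" "d A P + d P Q = d A Q"
    and "d B P + d P Q = d B Q \<or> d Q P + d P C = d Q C"
    by (auto simp: mem_msegment_iff)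
  moreover have "d A B \<le> d A P + d P B" "d A C \<le> d A P + d P C"
    using triangle assms(1-3) P(1) by blast+
  moreover have "d A Q + d Q B = d A B" "d A Q + d Q C = d A C" "Q \<in> M"
    using Q by (auto simp: mem_msegment_iff)
  ultimately have "d P Q = 0"
    using nonneg[of P Q] commute[of B P] commute[of B Q] commute[of Q P] by linarith
  then show "P = Q" using P(1) \<open>Q \<in> M\<close> by simp
qed

lemma R_tree_unique_median:
  assumes "R_tree M d" "A \<in> M" "B \<in> M" "C \<in> M"
  shows "\<exists>!P. median_point M d A B C P"
proof -
  obtain Q where Q: "Q \<in> M" and inter: "msegment M d A B \<inter> msegment M d A C = msegment M d A Q"
    using assms unfolding R_tree_def by blast
  have QAB: "Q \<in> msegment M d A B" and QAC: "Q \<in> msegment M d A C"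
    using inter endpoints_mem_msegment assms(2) Q by blast+
  have union: "msegment M d B Q \<union> msegment M d Q C = msegment M d B C"
    using inter_msegment_branch[OF assms(2-4) Q inter] assms Q unfolding R_tree_def by blast
  then have "Q \<in> msegment M d B C" using endpoints_mem_msegment assms(3) Q by blast
  with QAB QAC have "median_point M d A B C Q" by (simp add: median_point_def)
  then show ?thesis
    using median_point_unique_at_branch[OF assms(2-4) inter union QAB QAC] by blast
qed

end

locale unique_segment_space = Metric_space +
  assumes unique_segment: "A \<in> M \<Longrightarrow> B \<in> M \<Longrightarrow> joined_by_unique_segment M d A B"
begin

lemma msegment_split:
  assumes "A \<in> M" "B \<in> M" "X \<in> msegment M d A B" "Q \<in> msegment M d A B"
  shows "d A Q \<le> d A X \<Longrightarrow> X \<in> msegment M d Q B"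
    and "d A X \<le> d A Q \<Longrightarrow> X \<in> msegment M d A Q"
proof -
  obtain \<gamma> where g: "\<gamma> 0 = A" "\<gamma> (d A B) = B" "\<gamma> ` {0..d A B} = msegment M d A B"
    and isom: "\<forall>s\<in>{0..d A B}. \<forall>t\<in>{0..d A B}. d (\<gamma> s) (\<gamma> t) = \<bar>s - t\<bar>"
    using unique_segment[OF assms(1,2)] unfolding joined_by_unique_segment_def by blast
  obtain s t where s: "s \<in> {0..d A B}" "X = \<gamma> s" and t: "t \<in> {0..d A B}" "Q = \<gamma> t"
    using assms(3,4) g(3) by (metis imageE)
  have ends: "0 \<in> {0..d A B}" "d A B \<in> {0..d A B}" using s by auto
  have "d A X = s" "d A Q = t" "d Q X = \<bar>t - s\<bar>" "d X Q = \<bar>t - s\<bar>"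
    using isom s t ends g(1) by (metis abs_minus_commute diff_zero abs_of_nonneg atLeastAtMost_iff)+
  moreover have "d X B = d A B - s" "d Q B = d A B - t"
    using isom s t ends g(2) by (metis abs_minus_commute abs_of_nonneg atLeastAtMost_iff diff_ge_0_iff_ge)+
  moreover have "X \<in> M" "Q \<in> M" using assms(3,4) by (auto simp: mem_msegment_iff)
  ultimately show "d A Q \<le> d A X \<Longrightarrow> X \<in> msegment M d Q B"
    and "d A X \<le> d A Q \<Longrightarrow> X \<in> msegment M d A Q"
    by (simp_all add: mem_msegment_iff)
qed

lemma msegment_union_through:
  assumes "A \<in> M" "C \<in> M" "B \<in> msegment M d A C"
  shows "msegment M d A B \<union> msegment M d B C = msegment M d A C"
proof
  show "msegment M d A B \<union> msegment M d B C \<subseteq> msegment M d A C"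
    using msegment_trans[OF assms(2,1)] msegment_trans[OF assms] assms(3) msegment_commute by blast
  show "msegment M d A C \<subseteq> msegment M d A B \<union> msegment M d B C"
    using msegment_split[OF assms(1,2) _ assms(3)] by (meson UnI1 UnI2 linear subsetI)
qed

lemma inter_msegment_eq_median:
  assumes "A \<in> M" "B \<in> M" "C \<in> M"
    and median: "median_point M d A B C Q"
    and unique: "\<And>P. median_point M d A B C P \<Longrightarrow> P = Q"
  shows "msegment M d A B \<inter> msegment M d A C = msegment M d A Q"
proof
  have QAB: "Q \<in> msegment M d A B" and QAC: "Q \<in> msegment M d A C" and QBC: "Q \<in> msegment M d B C"
    using median by (auto simp: median_point_def)
  show "msegment M d A Q \<subseteq> msegment M d A B \<inter> msegment M d A C"
    using msegment_trans[OF assms(2,1)] msegment_trans[OF assms(3,1)] QAB QAC msegment_commute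
    by blast
  show "msegment M d A B \<inter> msegment M d A C \<subseteq> msegment M d A Q"
  proof
    fix X assume X: "X \<in> msegment M d A B \<inter> msegment M d A C"
    show "X \<in> msegment M d A Q"
    proof (cases "d A X \<le> d A Q")
      case True
      then show ?thesis using msegment_split(2)[OF assms(1,2) _ QAB] X by blast
    next
      case False
      then have "X \<in> msegment M d Q C" using msegment_split(1)[OF assms(1,3) _ QAC] X by simp
      then have "X \<in> msegment M d B C" using msegment_trans[OF assms(2,3) QBC] by blast
      with X have "X = Q" using unique by (simp add: median_point_def)
      then show ?thesis using endpoints_mem_msegment assms(1) QAB by (auto simp: mem_msegment_iff)
    qed
  qed
qed

lemma R_tree_if_unique_median:
  assumes "M \<noteq> {}"
    and median: "\<And>A B C. A \<in> M \<Longrightarrow> B \<in> M \<Longrightarrow> C \<in> M \<Longrightarrow> A \<noteq> B \<Longrightarrow> A \<noteq> C \<Longrightarrow> B \<noteq> C \<Longrightarrow>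
                   \<exists>!P. median_point M d A B C P"
  shows "R_tree M d"
proof -
  have branch: "\<exists>P\<in>M. msegment M d A B \<inter> msegment M d A C = msegment M d A P"
    if ABC: "A \<in> M" "B \<in> M" "C \<in> M" for A B C
  proof (cases "A = B \<or> A = C \<or> B = C")
    case True
    then show ?thesis
    proof (elim disjE)
      assume "A = B"
      then show ?thesis using ABC endpoints_mem_msegment by (intro bexI[of _ A]) (auto simp: msegment_same)
    next
      assume "A = C"
      then show ?thesis using ABC endpoints_mem_msegment by (intro bexI[of _ A]) (auto simp: msegment_same)
    next
      assume "B = C"
      then show ?thesis using ABC by blast
    qed
  next
    case False
    then obtain Q where "median_point M d A B C Q" "\<And>P. median_point M d A B C P \<Longrightarrow> P = Q"
      using median[OF ABC] by blast
    then show ?thesis using inter_msegment_eq_median[OF ABC] median_point_in_space by blast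
  qed
  have gluing: "msegment M d A B \<union> msegment M d B C = msegment M d A C"
    if ABC: "A \<in> M" "B \<in> M" "C \<in> M"
      and meet: "msegment M d A B \<inter> msegment M d B C = {B}" for A B C
  proof -
    have "B \<in> msegment M d A C"
    proof (cases "A = B \<or> B = C")
      case True
      then show ?thesis using endpoints_mem_msegment ABC by blast
    next
      case False
      moreover have "A \<noteq> C"
      proof
        assume "A = C"
        then have "A \<in> msegment M d A B \<inter> msegment M d B C"
          using endpoints_mem_msegment ABC msegment_commute by blast
        with meet False show False by blast
      qed
      ultimately obtain Q where Q: "median_point M d A B C Q" using median[OF ABC] by blast
      then have "Q = B" using meet by (auto simp: median_point_def)
      then show ?thesis using Q by (simp add: median_point_def)
    qed
    then show ?thesis using msegment_union_through ABC by blast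
  qed
  show ?thesis
    unfolding R_tree_def using Metric_space_axioms assms(1) unique_segment branch gluing by blast
qed

end

theorem theorem2p2:
  fixes M :: "'a set" and d :: "'a \<Rightarrow> 'a \<Rightarrow> real"
  assumes "Metric_space M d"
    and "M \<noteq> {}"
    and "\<forall>A\<in>M. \<forall>B\<in>M. joined_by_unique_segment M d A B"
  shows "R_tree M d \<longleftrightarrow> condition_A M d"
proof -
  interpret unique_segment_space M d
    using assms by (simp add: unique_segment_space_def unique_segment_space_axioms_def)
  show ?thesis
    unfolding condition_A_iff_unique_median
    using R_tree_unique_median R_tree_if_unique_median[OF assms(2)] by blast
qed

end
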